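(* Let $F$ be a finite-precision CDF and $S$ a finite-precision survival function over a binary number format $\mathcal{B}=(n,\gamma_{\mathcal{B}},\phi_{\mathcal{B}})$, with values in $\mathbb{F}^E_m\cap[0,1]$. Let $b^*:=\min_{<_{\mathcal{B}}}\{b\in\{0,1\}^n:F(b)\ge\mathrm{succ}(1/2)\}$ with $\mathrm{succ}(1/2)$ the smallest element of $\mathbb{F}^E_m$ greater than $1/2$, suppose $S(b^* )<1/2$, and define $G(b):=(0,F(b))$ if $b<_{\mathcal{B}}b^*$ and $G(b):=(1,S(b))$ if $b\ge_{\mathcal{B}}b^*$; let $G^*(b):=(1-d)f+d(1-f)$ for $(d,f)=G(b)$. Then: (i) there is a random variable $X$ with values in $\overline{\mathbb{R}}_{\mathcal{B}}:=\gamma_{\mathcal{B}}(\{0,1\}^n)$ such that $\Pr(X\le t)=(1-d)f+d(1-f)$ for every $t\in\overline{\mathbb{R}}_{\mathcal{B}}$, where $(d,f)=G(r(t))$ and $r(t):=\max_{<_{\mathcal{B}}}\{b\in\{0,1\}^n:\gamma_{\mathcal{B}}(b)\le t\}$; (ii) the image of $G$ is contained in $\{(0,f):0\le f\le1/2\}\cup\{(1,f):0\le f<1/2\}$; (iii) for all $b,b'\in\{0,1\}^n$, if the first component of $G(b)$ is less than the first component of $G(b')$, then $G^*(b)<G^*(b')$.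
   Context: $\overline{\mathbb{R}}=\mathbb{R}\cup\{-\infty,+\infty,\bot\}$ is totally ordered by $-\infty<$ reals $<+\infty<\bot$, with $\le$ the corresponding weak order. A binary number format $\mathcal{B}=(n,\gamma_{\mathcal{B}},\phi_{\mathcal{B}})$ consists of $n\ge1$, $\gamma_{\mathcal{B}}:\{0,1\}^n\to\overline{\mathbb{R}}$, and a bijection $\phi_{\mathcal{B}}$ of $\{0,1\}^n$ with $b<_{\mathrm{dict}}b'\Rightarrow\gamma_{\mathcal{B}}(\phi_{\mathcal{B}}(b))\le\gamma_{\mathcal{B}}(\phi_{\mathcal{B}}(b'))$; it induces the linear order $b<_{\mathcal{B}}b'$ iff $\phi_{\mathcal{B}}^{-1}(b)<_{\mathrm{dict}}\phi_{\mathcal{B}}^{-1}(b')$. $\mathbb{F}^E_m$ is the set of floating-point numbers with $E$ exponent and $m$ mantissa bits. A finite-precision CDF over $\mathcal{B}$ is $F:\{0,1\}^n\to\mathbb{F}^E_m\cap[0,1]$ with $F(\phi_{\mathcal{B}}(1^n))=1$ and $b<_{\mathcal{B}}b'\Rightarrow F(b)\le F(b')$. A finite-precision survival function over $\mathcal{B}$ is $S:\{0,1\}^n\to\mathbb{F}^E_m\cap[0,1]$ with $S(\phi_{\mathcal{B}}(1^n))=0$ and $b<_{\mathcal{B}}b'\Rightarrow S(b')\le S(b)$. *)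

theory Defs
  imports "HOL-Probability.Probability"
begin

text \<open>The totally ordered set R-bar = R with -inf, +inf and bot, ordered
  -inf < reals < +inf < bot.\<close>

datatype xreal = MInf | Fin real | PInf | Undef

fun xkey :: "xreal \<Rightarrow> nat \<times> real" where
  "xkey MInf = (0, 0)"
| "xkey (Fin x) = (1, x)"
| "xkey PInf = (2, 0)"
| "xkey Undef = (3, 0)"

lemma xkey_inj: "xkey a = xkey b \<Longrightarrow> a = b"
  by (cases a; cases b; auto)

instantiation xreal :: linorder
begin
definition less_eq_xreal :: "xreal \<Rightarrow> xreal \<Rightarrow> bool" where
  "less_eq_xreal a b \<longleftrightarrow> fst (xkey a) < fst (xkey b)
     \<or> (fst (xkey a) = fst (xkey b) \<and> snd (xkey a) \<le> snd (xkey b))"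
definition less_xreal :: "xreal \<Rightarrow> xreal \<Rightarrow> bool" where
  "less_xreal a b \<longleftrightarrow> a \<le> b \<and> \<not> b \<le> a"
instance
proof
  fix x y z :: xreal
  show "(x < y) = (x \<le> y \<and> \<not> y \<le> x)" by (simp add: less_xreal_def)
  show "x \<le> x" by (simp add: less_eq_xreal_def)
  show "x \<le> y \<Longrightarrow> y \<le> z \<Longrightarrow> x \<le> z" by (auto simp: less_eq_xreal_def)
  show "x \<le> y \<Longrightarrow> y \<le> x \<Longrightarrow> x = y"
    by (rule xkey_inj) (auto simp: less_eq_xreal_def prod_eq_iff)
  show "x \<le> y \<or> y \<le> x" by (auto simp: less_eq_xreal_def)
qed
end

definition bits :: "nat \<Rightarrow> bool list set" where
  "bits n = {b. length b = n}"

definition dict_less :: "bool list \<Rightarrow> bool list \<Rightarrow> bool" where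
  "dict_less b b' \<longleftrightarrow> (b, b') \<in> lex {(False, True)}"

definition binary_number_format ::
  "nat \<Rightarrow> (bool list \<Rightarrow> xreal) \<Rightarrow> (bool list \<Rightarrow> bool list) \<Rightarrow> bool" where
  "binary_number_format n \<gamma> \<phi> \<longleftrightarrow> n \<ge> 1 \<and> bij_betw \<phi> (bits n) (bits n)
     \<and> (\<forall>b\<in>bits n. \<forall>b'\<in>bits n. dict_less b b' \<longrightarrow> \<gamma> (\<phi> b) \<le> \<gamma> (\<phi> b'))"

definition fmt_less :: "nat \<Rightarrow> (bool list \<Rightarrow> bool list) \<Rightarrow> bool list \<Rightarrow> bool list \<Rightarrow> bool" where
  "fmt_less n \<phi> b b' \<longleftrightarrow> dict_less (inv_into (bits n) \<phi> b) (inv_into (bits n) \<phi> b')"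

definition fmt_min :: "nat \<Rightarrow> (bool list \<Rightarrow> bool list) \<Rightarrow> (bool list \<Rightarrow> bool) \<Rightarrow> bool list" where
  "fmt_min n \<phi> P = (THE b. b \<in> bits n \<and> P b \<and> (\<forall>b'\<in>bits n. P b' \<longrightarrow> \<not> fmt_less n \<phi> b' b))"

definition fmt_max :: "nat \<Rightarrow> (bool list \<Rightarrow> bool list) \<Rightarrow> (bool list \<Rightarrow> bool) \<Rightarrow> bool list" where
  "fmt_max n \<phi> P = (THE b. b \<in> bits n \<and> P b \<and> (\<forall>b'\<in>bits n. P b' \<longrightarrow> \<not> fmt_less n \<phi> b b'))"

text \<open>The finite (real) values of the IEEE-754-style binary floating-point format with
  E exponent bits and m mantissa bits: bias = 2^(E-1) - 1; subnormals (incl. zero)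
  +-(k/2^m) * 2^(1-bias) and normals +-(1 + k/2^m) * 2^(e-bias), 1 <= e <= 2^E - 2,
  k < 2^m.  (Infinities and NaN are not reals and play no role in F^E_m intersected [0,1].)\<close>
definition fp_bias :: "nat \<Rightarrow> int" where
  "fp_bias E = 2 ^ (E - 1) - 1"

definition fp_set :: "nat \<Rightarrow> nat \<Rightarrow> real set" where
  "fp_set E m =
     {s * (real k / 2 ^ m) * 2 powi (1 - fp_bias E) | s k. s \<in> {-1, 1} \<and> k < 2 ^ m}
   \<union> {s * (1 + real k / 2 ^ m) * 2 powi (int e - fp_bias E) | s k e.
        s \<in> {-1, 1} \<and> k < 2 ^ m \<and> 1 \<le> e \<and> e \<le> 2 ^ E - 2}"

definition fp_succ :: "nat \<Rightarrow> nat \<Rightarrow> real \<Rightarrow> real" where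
  "fp_succ E m x = Min {y \<in> fp_set E m. y > x}"

definition fp_cdf ::
  "nat \<Rightarrow> nat \<Rightarrow> nat \<Rightarrow> (bool list \<Rightarrow> bool list) \<Rightarrow> (bool list \<Rightarrow> real) \<Rightarrow> bool" where
  "fp_cdf E m n \<phi> F \<longleftrightarrow>
     (\<forall>b\<in>bits n. F b \<in> fp_set E m \<and> 0 \<le> F b \<and> F b \<le> 1)
   \<and> F (\<phi> (replicate n True)) = 1
   \<and> (\<forall>b\<in>bits n. \<forall>b'\<in>bits n. fmt_less n \<phi> b b' \<longrightarrow> F b \<le> F b')"

definition fp_survival ::
  "nat \<Rightarrow> nat \<Rightarrow> nat \<Rightarrow> (bool list \<Rightarrow> bool list) \<Rightarrow> (bool list \<Rightarrow> real) \<Rightarrow> bool" where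
  "fp_survival E m n \<phi> S \<longleftrightarrow>
     (\<forall>b\<in>bits n. S b \<in> fp_set E m \<and> 0 \<le> S b \<and> S b \<le> 1)
   \<and> S (\<phi> (replicate n True)) = 0
   \<and> (\<forall>b\<in>bits n. \<forall>b'\<in>bits n. fmt_less n \<phi> b b' \<longrightarrow> S b' \<le> S b)"

definition bstar ::
  "nat \<Rightarrow> nat \<Rightarrow> nat \<Rightarrow> (bool list \<Rightarrow> bool list) \<Rightarrow> (bool list \<Rightarrow> real) \<Rightarrow> bool list" where
  "bstar E m n \<phi> F = fmt_min n \<phi> (\<lambda>b. F b \<ge> fp_succ E m (1/2))"

definition Gfun ::
  "nat \<Rightarrow> nat \<Rightarrow> nat \<Rightarrow> (bool list \<Rightarrow> bool list) \<Rightarrow> (bool list \<Rightarrow> real) \<Rightarrow> (bool list \<Rightarrow> real)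
     \<Rightarrow> bool list \<Rightarrow> real \<times> real" where
  "Gfun E m n \<phi> F S b =
     (if fmt_less n \<phi> b (bstar E m n \<phi> F) then (0, F b) else (1, S b))"

definition Gstar ::
  "nat \<Rightarrow> nat \<Rightarrow> nat \<Rightarrow> (bool list \<Rightarrow> bool list) \<Rightarrow> (bool list \<Rightarrow> real) \<Rightarrow> (bool list \<Rightarrow> real)
     \<Rightarrow> bool list \<Rightarrow> real" where
  "Gstar E m n \<phi> F S b =
     (let (d, f) = Gfun E m n \<phi> F S b in (1 - d) * f + d * (1 - f))"

definition rfun :: "nat \<Rightarrow> (bool list \<Rightarrow> xreal) \<Rightarrow> (bool list \<Rightarrow> bool list) \<Rightarrow> xreal \<Rightarrow> bool list" where
  "rfun n \<gamma> \<phi> t = fmt_max n \<phi> (\<lambda>b. \<gamma> b \<le> t)"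

end

theory Submission
  imports Defs "HOL-Library.List_Lexorder"
begin

text \<open>Below b* the value F b is a float smaller than succ(1/2), hence at most 1/2; from b* on,
  S b \<le> S b* < 1/2.  So G* equals F below b* and 1 - S from b* on, is monotone for the format
  order (which, through the inverse of \<phi>, is the lexicographic order of bit strings), jumps
  from at most 1/2 to above 1/2 at b*, and ends with 1 - S(\<phi>(1...1)) = 1.  Composed with the
  monotone map r it is therefore the distribution function of a probability on the values of
  the format.\<close>

lemma cumulative_weights_exist:
  fixes H :: "'a::linorder \<Rightarrow> real"
  assumes "finite A" "A \<subseteq> T"
    and mono: "\<And>s t. s \<in> T \<Longrightarrow> t \<in> T \<Longrightarrow> s \<le> t \<Longrightarrow> H s \<le> H t"
    and nonneg: "\<And>t. t \<in> T \<Longrightarrow> 0 \<le> H t"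
  shows "\<exists>w. (\<forall>x. 0 \<le> w x) \<and> (\<forall>x. x \<notin> A \<longrightarrow> w x = 0)
           \<and> (\<forall>t\<in>A. sum w {s\<in>A. s \<le> t} = H t)"
  using assms(1,2)
proof (induction A rule: finite_linorder_max_induct)
  case empty
  show ?case by (intro exI[of _ "\<lambda>_. 0"]) auto
next
  case (insert b A)
  then obtain w where w: "\<forall>x. 0 \<le> w x" "\<forall>x. x \<notin> A \<longrightarrow> w x = 0"
      "\<forall>t\<in>A. sum w {s\<in>A. s \<le> t} = H t"
    by auto
  have bA: "b \<notin> A" and bT: "b \<in> T" using insert by auto
  define c where "c = (if A = {} then 0 else H (Max A))"
  have sum_A: "sum w A = c" and c_le: "c \<le> H b"
  proof -
    show "sum w A = c"
    proof (cases "A = {}")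
      case False
      then have "{s\<in>A. s \<le> Max A} = A" using insert by auto
      then show ?thesis using w(3) Max_in[OF insert(1) False] False unfolding c_def by metis
    qed (simp add: c_def)
    show "c \<le> H b"
    proof (cases "A = {}")
      case False
      have "Max A \<in> A" using Max_in[OF insert(1) False] .
      then have "Max A \<in> T" "Max A \<le> b" using insert by auto
      then show ?thesis using mono[OF _ bT] False unfolding c_def by simp
    qed (simp add: c_def nonneg[OF bT])
  qed
  define w' where "w' = w(b := H b - c)"
  have w'_A: "sum w' B = sum w B" if "B \<subseteq> A" for B
    unfolding w'_def using bA that by (intro sum.cong) auto
  show ?case
  proof (intro exI[of _ w'] conjI ballI allI impI)
    show "0 \<le> w' x" for x using w(1) c_le unfolding w'_def by auto
    show "w' x = 0" if "x \<notin> insert b A" for x using w(2) that unfolding w'_def by auto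
  next
    fix t assume t: "t \<in> insert b A"
    show "sum w' {s \<in> insert b A. s \<le> t} = H t"
    proof (cases "t = b")
      case True
      then have "{s \<in> insert b A. s \<le> t} = insert b A" using insert by auto
      then show ?thesis using True bA insert(1) w'_A[of A] sum_A by (simp add: w'_def)
    next
      case False
      then have "t \<in> A" "{s \<in> insert b A. s \<le> t} = {s\<in>A. s \<le> t}" using t insert by force+
      then show ?thesis using w(3) w'_A[of "{s\<in>A. s \<le> t}"] by auto
    qed
  qed
qed

lemma pmf_with_cdf_exists:
  fixes H :: "'a::linorder \<Rightarrow> real"
  assumes "finite T" "T \<noteq> {}"
    and mono: "\<And>s t. s \<in> T \<Longrightarrow> t \<in> T \<Longrightarrow> s \<le> t \<Longrightarrow> H s \<le> H t"
    and nonneg: "\<And>t. t \<in> T \<Longrightarrow> 0 \<le> H t"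
    and H_Max: "H (Max T) = 1"
  shows "\<exists>p :: 'a pmf. set_pmf p \<subseteq> T \<and> (\<forall>t\<in>T. measure_pmf.prob p {x. x \<le> t} = H t)"
proof -
  obtain w where w_nonneg: "\<And>x. 0 \<le> w x" and w_zero: "\<And>x. x \<notin> T \<Longrightarrow> w x = 0"
    and w_cum: "\<And>t. t \<in> T \<Longrightarrow> sum w {s\<in>T. s \<le> t} = H t"
    using cumulative_weights_exist[of T T H] assms by blast
  have "{s\<in>T. s \<le> Max T} = T" using assms(1) by auto
  then have "sum w T = 1" using w_cum[OF Max_in[OF assms(1,2)]] H_Max by simp
  moreover have "(\<integral>\<^sup>+x. ennreal (w x) \<partial>count_space UNIV) = (\<Sum>x\<in>T. ennreal (w x))"
    using assms(1) w_zero by (intro nn_integral_count_space') auto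
  ultimately have total: "(\<integral>\<^sup>+x. ennreal (w x) \<partial>count_space UNIV) = 1"
    using w_nonneg by (simp add: sum_ennreal)
  define p where "p = embed_pmf w"
  have pmf_p: "pmf p x = w x" for x
    unfolding p_def using w_nonneg total by (intro pmf_embed_pmf) auto
  have set_p: "set_pmf p \<subseteq> T" using w_zero by (auto simp: set_pmf_iff pmf_p intro: ccontr)
  have "measure_pmf.prob p {x. x \<le> t} = H t" if "t \<in> T" for t
  proof -
    have "measure_pmf.prob p {x. x \<le> t} = measure_pmf.prob p ({x. x \<le> t} \<inter> set_pmf p)"
      by (rule measure_Int_set_pmf[symmetric])
    also have "\<dots> = measure_pmf.prob p ({x. x \<le> t} \<inter> T \<inter> set_pmf p)"
      using set_p by (simp add: Int_absorb1 Int_assoc)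
    also have "\<dots> = sum (pmf p) ({x. x \<le> t} \<inter> T)"
      using assms(1) by (simp add: measure_Int_set_pmf measure_measure_pmf_finite)
    also have "\<dots> = H t"
      using w_cum[OF that] by (simp add: pmf_p Collect_conj_eq Int_commute)
    finally show ?thesis .
  qed
  with set_p show ?thesis by blast
qed

lemma The_least_key:
  fixes \<kappa> :: "'a \<Rightarrow> 'b::linorder"
  assumes "finite A" "inj_on \<kappa> A" "a \<in> A" "P a"
    and R: "\<And>x y. x \<in> A \<Longrightarrow> y \<in> A \<Longrightarrow> R x y \<longleftrightarrow> \<kappa> x < \<kappa> y"
  defines "c \<equiv> THE c. c \<in> A \<and> P c \<and> (\<forall>y\<in>A. P y \<longrightarrow> \<not> R y c)"
  shows "c \<in> A \<and> P c \<and> (\<forall>y\<in>A. P y \<longrightarrow> \<kappa> c \<le> \<kappa> y)"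
proof -
  have fin: "finite (\<kappa> ` {x\<in>A. P x})" "\<kappa> ` {x\<in>A. P x} \<noteq> {}" using assms by auto
  obtain c' where c': "c' \<in> A" "P c'" "\<kappa> c' = Min (\<kappa> ` {x\<in>A. P x})" using Min_in[OF fin] by auto
  have least: "\<forall>y\<in>A. P y \<longrightarrow> \<kappa> c' \<le> \<kappa> y" using c' fin by auto
  have "c = c'" unfolding c_def
  proof (rule the_equality)
    show "c' \<in> A \<and> P c' \<and> (\<forall>y\<in>A. P y \<longrightarrow> \<not> R y c')" using c' least R by (auto simp: not_less)
  next
    fix x assume x: "x \<in> A \<and> P x \<and> (\<forall>y\<in>A. P y \<longrightarrow> \<not> R y x)"
    then have "\<kappa> x = \<kappa> c'" using c' least R by (meson antisym not_less)
    then show "x = c'" using inj_onD[OF assms(2)] x c' by blast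
  qed
  then show ?thesis using c' least by blast
qed

lemma The_greatest_key:
  fixes \<kappa> :: "'a \<Rightarrow> 'b::linorder"
  assumes "finite A" "inj_on \<kappa> A" "a \<in> A" "P a"
    and R: "\<And>x y. x \<in> A \<Longrightarrow> y \<in> A \<Longrightarrow> R x y \<longleftrightarrow> \<kappa> x < \<kappa> y"
  defines "c \<equiv> THE c. c \<in> A \<and> P c \<and> (\<forall>y\<in>A. P y \<longrightarrow> \<not> R c y)"
  shows "c \<in> A \<and> P c \<and> (\<forall>y\<in>A. P y \<longrightarrow> \<kappa> y \<le> \<kappa> c)"
proof -
  have fin: "finite (\<kappa> ` {x\<in>A. P x})" "\<kappa> ` {x\<in>A. P x} \<noteq> {}" using assms by auto
  obtain c' where c': "c' \<in> A" "P c'" "\<kappa> c' = Max (\<kappa> ` {x\<in>A. P x})" using Max_in[OF fin] by auto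
  have greatest: "\<forall>y\<in>A. P y \<longrightarrow> \<kappa> y \<le> \<kappa> c'" using c' fin by auto
  have "c = c'" unfolding c_def
  proof (rule the_equality)
    show "c' \<in> A \<and> P c' \<and> (\<forall>y\<in>A. P y \<longrightarrow> \<not> R c' y)" using c' greatest R by (auto simp: not_less)
  next
    fix x assume x: "x \<in> A \<and> P x \<and> (\<forall>y\<in>A. P y \<longrightarrow> \<not> R x y)"
    then have "\<kappa> x = \<kappa> c'" using c' greatest R by (meson antisym not_less)
    then show "x = c'" using inj_onD[OF assms(2)] x c' by blast
  qed
  then show ?thesis using c' greatest by blast
qed

lemma finite_bits: "finite (bits n)"
  using finite_lists_length_eq[of "UNIV :: bool set" n] by (simp add: bits_def)

lemma dict_less_iff_less: "dict_less x y \<longleftrightarrow> x < y" if "length x = length y"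
proof -
  have "{(u, v :: bool). u < v} = {(False, True)}" by auto
  then show ?thesis using that by (simp add: dict_less_def list_less_def lexord_lex)
qed

lemma le_replicate_True: "length x = n \<Longrightarrow> x \<le> replicate n True"
proof (induction x arbitrary: n)
  case (Cons a x)
  then show ?case by (cases n) (auto simp: less_le)
qed simp

context
  fixes n :: nat and \<phi> :: "bool list \<Rightarrow> bool list"
  assumes bij: "bij_betw \<phi> (bits n) (bits n)"
begin

lemma inv_into_bits_in_bits: "b \<in> bits n \<Longrightarrow> inv_into (bits n) \<phi> b \<in> bits n"
  using bij by (metis bij_betwE bij_betw_inv_into)

lemma inj_on_inv_into_bits: "inj_on (inv_into (bits n) \<phi>) (bits n)"
  using bij bij_betw_imp_inj_on bij_betw_inv_into by blast

lemma fmt_less_iff: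
  "b \<in> bits n \<Longrightarrow> b' \<in> bits n \<Longrightarrow>
     fmt_less n \<phi> b b' \<longleftrightarrow> inv_into (bits n) \<phi> b < inv_into (bits n) \<phi> b'"
  using inv_into_bits_in_bits by (simp add: fmt_less_def dict_less_iff_less bits_def)

lemma fmt_min_least:
  assumes "b \<in> bits n" "P b"
  shows "fmt_min n \<phi> P \<in> bits n \<and> P (fmt_min n \<phi> P)
    \<and> (\<forall>b'\<in>bits n. P b' \<longrightarrow> inv_into (bits n) \<phi> (fmt_min n \<phi> P) \<le> inv_into (bits n) \<phi> b')"
  unfolding fmt_min_def
  using The_least_key[OF finite_bits inj_on_inv_into_bits, of b P "fmt_less n \<phi>"] assms fmt_less_iff
  by blast

lemma fmt_max_greatest:
  assumes "b \<in> bits n" "P b"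
  shows "fmt_max n \<phi> P \<in> bits n \<and> P (fmt_max n \<phi> P)
    \<and> (\<forall>b'\<in>bits n. P b' \<longrightarrow> inv_into (bits n) \<phi> b' \<le> inv_into (bits n) \<phi> (fmt_max n \<phi> P))"
  unfolding fmt_max_def
  using The_greatest_key[OF finite_bits inj_on_inv_into_bits, of b P "fmt_less n \<phi>"] assms fmt_less_iff
  by blast

lemma fmt_top_in_bits: "\<phi> (replicate n True) \<in> bits n"
  using bij by (auto simp: bits_def dest: bij_betwE)

lemma inv_into_fmt_top_greatest:
  "b \<in> bits n \<Longrightarrow> inv_into (bits n) \<phi> b \<le> inv_into (bits n) \<phi> (\<phi> (replicate n True))"
  using bij inv_into_bits_in_bits
  by (simp add: bij_betw_imp_inj_on bits_def le_replicate_True)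

lemma rfun_greatest:
  assumes "t \<in> \<gamma> ` bits n"
  shows "rfun n \<gamma> \<phi> t \<in> bits n \<and> \<gamma> (rfun n \<gamma> \<phi> t) \<le> t
    \<and> (\<forall>b\<in>bits n. \<gamma> b \<le> t \<longrightarrow> inv_into (bits n) \<phi> b \<le> inv_into (bits n) \<phi> (rfun n \<gamma> \<phi> t))"
  using assms fmt_max_greatest[of _ "\<lambda>b. \<gamma> b \<le> t"] unfolding rfun_def by blast

end

lemma finite_image_set3:
  "finite {x. P x} \<Longrightarrow> finite {y. Q y} \<Longrightarrow> finite {z. R z} \<Longrightarrow>
    finite {f x y z |x y z. P x \<and> Q y \<and> R z}"
  by (rule finite_subset[where B = "\<Union>x\<in>{x. P x}. \<Union>y\<in>{y. Q y}. \<Union>z\<in>{z. R z}. {f x y z}"]) auto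

lemma finite_fp_set: "finite (fp_set E m)"
  unfolding fp_set_def by (intro finite_UnI finite_image_set2 finite_image_set3) auto

lemma fp_succ_le: "y \<in> fp_set E m \<Longrightarrow> x < y \<Longrightarrow> fp_succ E m x \<le> y"
  by (simp add: fp_succ_def finite_fp_set)

locale fp_cdf_survival_pair =
  fixes n E m :: nat and \<phi> :: "bool list \<Rightarrow> bool list" and F S :: "bool list \<Rightarrow> real"
  assumes bij: "bij_betw \<phi> (bits n) (bits n)"
    and cdf: "fp_cdf E m n \<phi> F"
    and surv: "fp_survival E m n \<phi> S"
    and S_bstar_less_half: "S (bstar E m n \<phi> F) < 1/2"
begin

abbreviation "pos \<equiv> inv_into (bits n) \<phi>"
abbreviation "b_top \<equiv> \<phi> (replicate n True)"
abbreviation "b_star \<equiv> bstar E m n \<phi> F"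
abbreviation "G \<equiv> Gfun E m n \<phi> F S"
abbreviation "G_star \<equiv> Gstar E m n \<phi> F S"

lemma pos_le_cases:
  "b \<in> bits n \<Longrightarrow> b' \<in> bits n \<Longrightarrow> pos b \<le> pos b' \<Longrightarrow> b = b' \<or> fmt_less n \<phi> b b'"
  using fmt_less_iff[OF bij] inj_on_inv_into_bits[OF bij] by (metis inj_onD order_le_less)

lemma F_bounds: "b \<in> bits n \<Longrightarrow> F b \<in> fp_set E m \<and> 0 \<le> F b \<and> F b \<le> 1"
  using cdf by (simp add: fp_cdf_def)

lemma S_bounds: "b \<in> bits n \<Longrightarrow> 0 \<le> S b \<and> S b \<le> 1"
  using surv by (simp add: fp_survival_def)

lemma F_top: "F b_top = 1"
  using cdf by (simp add: fp_cdf_def)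

lemma S_top: "S b_top = 0"
  using surv by (simp add: fp_survival_def)

lemma F_mono:
  assumes "b \<in> bits n" "b' \<in> bits n" "pos b \<le> pos b'"
  shows "F b \<le> F b'"
  using pos_le_cases[OF assms] cdf assms by (auto simp: fp_cdf_def)

lemma S_antimono:
  assumes "b \<in> bits n" "b' \<in> bits n" "pos b \<le> pos b'"
  shows "S b' \<le> S b"
  using pos_le_cases[OF assms] surv assms by (auto simp: fp_survival_def)

lemma b_star_least:
  "b_star \<in> bits n \<and> fp_succ E m (1/2) \<le> F b_star
    \<and> (\<forall>b\<in>bits n. fp_succ E m (1/2) \<le> F b \<longrightarrow> pos b_star \<le> pos b)"
  unfolding bstar_def
  by (rule fmt_min_least[OF bij fmt_top_in_bits[OF bij]])
    (use fp_succ_le F_bounds[OF fmt_top_in_bits[OF bij]] F_top in simp)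

lemma F_le_half_below_b_star:
  assumes "b \<in> bits n" "pos b < pos b_star"
  shows "F b \<le> 1/2"
proof (rule ccontr)
  assume "\<not> F b \<le> 1/2"
  then have "fp_succ E m (1/2) \<le> F b" using fp_succ_le F_bounds[OF assms(1)] by simp
  then show False using b_star_least assms by force
qed

lemma S_less_half_from_b_star: "b \<in> bits n \<Longrightarrow> pos b_star \<le> pos b \<Longrightarrow> S b < 1/2"
  using S_antimono b_star_least S_bstar_less_half by force

lemma Gstar_eq: "b \<in> bits n \<Longrightarrow> G_star b = (if pos b < pos b_star then F b else 1 - S b)"
  using b_star_least fmt_less_iff[OF bij] by (simp add: Gstar_def Gfun_def)

lemma Gfun_eq: "b \<in> bits n \<Longrightarrow> G b = (if pos b < pos b_star then (0, F b) else (1, S b))"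
  using b_star_least fmt_less_iff[OF bij] by (simp add: Gfun_def)

lemma Gfun_image:
  "G ` bits n \<subseteq> {(0, f) | f. 0 \<le> f \<and> f \<le> 1/2} \<union> {(1, f) | f. 0 \<le> f \<and> f < 1/2}"
proof (rule image_subsetI)
  fix b assume b: "b \<in> bits n"
  show "G b \<in> {(0, f) | f. 0 \<le> f \<and> f \<le> 1/2} \<union> {(1, f) | f. 0 \<le> f \<and> f < 1/2}"
  proof (cases "pos b < pos b_star")
    case True
    then show ?thesis using Gfun_eq F_bounds F_le_half_below_b_star b by simp
  next
    case False
    then have "pos b_star \<le> pos b" by (simp add: not_less)
    then show ?thesis using False Gfun_eq S_bounds S_less_half_from_b_star b by simp
  qed
qed

lemma Gstar_less_if_fst_Gfun_less:
  assumes b: "b \<in> bits n" "b' \<in> bits n" and "fst (G b) < fst (G b')"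
  shows "G_star b < G_star b'"
proof -
  have below: "pos b < pos b_star" and not_below: "\<not> pos b' < pos b_star"
    using assms Gfun_eq[OF b(1)] Gfun_eq[OF b(2)] by (auto split: if_splits)
  then have "F b \<le> 1/2" "S b' < 1/2"
    using b F_le_half_below_b_star S_less_half_from_b_star by (auto simp: not_less)
  then show ?thesis using below not_below Gstar_eq b by simp
qed

lemma Gstar_mono:
  assumes b: "b \<in> bits n" "b' \<in> bits n" and le: "pos b \<le> pos b'"
  shows "G_star b \<le> G_star b'"
proof -
  consider "pos b' < pos b_star" | "pos b_star \<le> pos b" | "pos b < pos b_star" "pos b_star \<le> pos b'"
    using le by (meson le_less_trans not_less)
  then show ?thesis
  proof cases
    case 1
    then have "pos b < pos b_star" using le by simp
    then show ?thesis using 1 Gstar_eq b F_mono le by simp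
  next
    case 2
    then have "\<not> pos b < pos b_star" "\<not> pos b' < pos b_star" using le by simp_all
    then show ?thesis using Gstar_eq b S_antimono le by simp
  next
    case 3
    then have "F b \<le> 1/2" "S b' < 1/2"
      using b F_le_half_below_b_star S_less_half_from_b_star by auto
    moreover have "\<not> pos b' < pos b_star" using 3 by (simp add: not_less)
    ultimately show ?thesis using 3 Gstar_eq b by simp
  qed
qed

lemma Gstar_nonneg: "b \<in> bits n \<Longrightarrow> 0 \<le> G_star b"
  using Gstar_eq F_bounds S_bounds by simp

lemma Gstar_top: "G_star b_top = 1"
proof -
  have "\<not> pos b_top < pos b_star"
    using inv_into_fmt_top_greatest[OF bij] b_star_least by (simp add: not_less)
  then show ?thesis using Gstar_eq fmt_top_in_bits[OF bij] S_top by simp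
qed

lemma rfun_mono:
  assumes "s \<in> \<gamma> ` bits n" "t \<in> \<gamma> ` bits n" "s \<le> t"
  shows "pos (rfun n \<gamma> \<phi> s) \<le> pos (rfun n \<gamma> \<phi> t)"
  using rfun_greatest[OF bij assms(1)] rfun_greatest[OF bij assms(2)] assms(3) by (meson order_trans)

lemma rfun_Max: "rfun n \<gamma> \<phi> (Max (\<gamma> ` bits n)) = b_top"
proof -
  let ?t = "Max (\<gamma> ` bits n)"
  have top: "b_top \<in> bits n" using fmt_top_in_bits[OF bij] .
  then have t: "?t \<in> \<gamma> ` bits n" "\<gamma> b_top \<le> ?t" using finite_bits by (auto intro: Max_in)
  have "pos (rfun n \<gamma> \<phi> ?t) = pos b_top"
    using rfun_greatest[OF bij t(1)] t(2) top inv_into_fmt_top_greatest[OF bij] by (meson antisym)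
  then show ?thesis
    using rfun_greatest[OF bij t(1)] top inj_on_inv_into_bits[OF bij] by (auto dest: inj_onD)
qed

lemma Gstar_rfun_is_cdf:
  "\<exists>p :: xreal pmf. set_pmf p \<subseteq> \<gamma> ` bits n
     \<and> (\<forall>t\<in>\<gamma> ` bits n. measure_pmf.prob p {x. x \<le> t} = G_star (rfun n \<gamma> \<phi> t))"
proof (rule pmf_with_cdf_exists)
  show "finite (\<gamma> ` bits n)" "\<gamma> ` bits n \<noteq> {}"
    using finite_bits fmt_top_in_bits[OF bij] by auto
  show "G_star (rfun n \<gamma> \<phi> s) \<le> G_star (rfun n \<gamma> \<phi> t)"
    if "s \<in> \<gamma> ` bits n" "t \<in> \<gamma> ` bits n" "s \<le> t" for s t
    using Gstar_mono rfun_mono[OF that] rfun_greatest[OF bij] that by blast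
  show "0 \<le> G_star (rfun n \<gamma> \<phi> t)" if "t \<in> \<gamma> ` bits n" for t
    using Gstar_nonneg rfun_greatest[OF bij that] by blast
  show "G_star (rfun n \<gamma> \<phi> (Max (\<gamma> ` bits n))) = 1"
    using Gstar_top rfun_Max by simp
qed

end

theorem propositionE2:
  fixes n E m :: nat
    and \<gamma> :: "bool list \<Rightarrow> xreal"
    and \<phi> :: "bool list \<Rightarrow> bool list"
    and F S :: "bool list \<Rightarrow> real"
  assumes fmt: "binary_number_format n \<gamma> \<phi>"
    and cdf: "fp_cdf E m n \<phi> F"
    and surv: "fp_survival E m n \<phi> S"
    and Sbstar: "S (bstar E m n \<phi> F) < 1/2"
  shows "(\<exists>p :: xreal pmf. set_pmf p \<subseteq> \<gamma> ` bits n \<and>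
            (\<forall>t\<in>\<gamma> ` bits n. measure_pmf.prob p {x. x \<le> t} =
               (let (d, f) = Gfun E m n \<phi> F S (rfun n \<gamma> \<phi> t) in (1 - d) * f + d * (1 - f))))
       \<and> Gfun E m n \<phi> F S ` bits n \<subseteq> {(0, f) | f. 0 \<le> f \<and> f \<le> 1/2} \<union> {(1, f) | f. 0 \<le> f \<and> f < 1/2}
       \<and> (\<forall>b\<in>bits n. \<forall>b'\<in>bits n. fst (Gfun E m n \<phi> F S b) < fst (Gfun E m n \<phi> F S b')
            \<longrightarrow> Gstar E m n \<phi> F S b < Gstar E m n \<phi> F S b')"
proof -
  interpret fp_cdf_survival_pair n E m \<phi> F S
    using fmt cdf surv Sbstar by unfold_locales (simp_all add: binary_number_format_def)
  show ?thesis
    unfolding Gstar_def[symmetric]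
    using Gstar_rfun_is_cdf[of \<gamma>] Gfun_image Gstar_less_if_fst_Gfun_less by blast
qed

end
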